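(* There is a universal constant $c$ such that for every sufficiently large integer $N$ there is a covering of $\mathbb{S}^2$ by $N$ strips of Euclidean half-width $\frac{10\ln N}{N}$ in which no point of $\mathbb{S}^2$ is covered more than $c\ln N$ times.
   Context: $\mathbb{S}^2=\{x\in\mathbb{R}^3:|x|=1\}$. For $x\in\mathbb{S}^2$ and $0\le w\le 1$, the strip centered at $x$ of Euclidean half-width $w$ is $\{v\in\mathbb{S}^2:|\langle v,x\rangle|\le w\}$. *)

theory Defs
  imports "HOL-Analysis.Analysis"
begin

definition sphere2 :: "(real^3) set" where
  "sphere2 = {x. norm x = 1}"

definition strip :: "real^3 \<Rightarrow> real \<Rightarrow> (real^3) set" where
  "strip x w = {v \<in> sphere2. \<bar>inner v x\<bar> \<le> w}"

end

theory Submission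
  imports Defs
begin

(*
  Draw N independent uniform points of the shell 3/5 \<le> |g| \<le> 1 and take the strips centred at
  their radial projections.  Put L = ln N.  Since v lies in the strip around x iff x lies in the
  strip around v, it suffices to control, for every v, the number of sample points whose
  projection is within 10 L / N of the great circle orthogonal to v.  Discretise by a
  2 L / N-net of O(N\<^sup>2) points u.  For each u, the band of half-width 8 L / N around u misses
  all points with probability at most exp(-2.4 L), and the band of half-width 12 L / N catches
  at least t = 100 L points with probability at most (N choose t) p\<^sup>t \<le> exp(-10 L), where
  p = O(L / N) is the volume fraction of that band.  A union bound over the net leaves a good
  sample, and comparing v with its nearest net point gives a covering of multiplicity below 100 L.
*)

lemma power_div_fact_le_exp:
  fixes x :: real
  assumes "0 \<le> x"
  shows "x ^ n / fact n \<le> exp x"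
proof -
  have "summable (\<lambda>k. x ^ k / fact k)"
    using summable_exp[of x] by (simp add: field_simps)
  then have "(\<Sum>k\<in>{n}. x ^ k / fact k) \<le> (\<Sum>k. x ^ k / fact k)"
    by (rule sum_le_suminf) (use assms in auto)
  then show ?thesis
    by (simp add: exp_def field_simps)
qed

lemma power_diff_le_exp:
  fixes a m :: real
  assumes "0 \<le> a" "a \<le> m" "0 < m"
  shows "(m - a) ^ N \<le> m ^ N * exp (- (a * N / m))"
proof -
  have "(m - a) ^ N = m ^ N * (1 - a / m) ^ N"
    using assms(3) by (simp add: power_mult_distrib[symmetric] algebra_simps)
  also have "(1 - a / m) ^ N \<le> exp (- (a / m)) ^ N"
    using assms exp_ge_add_one_self[of "- (a / m)"] by (intro power_mono) auto
  also have "exp (- (a / m)) ^ N = exp (- (a * N / m))"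
    by (simp add: exp_of_nat_mult[symmetric] algebra_simps)
  finally show ?thesis
    using assms(3) by (simp add: mult_left_mono)
qed

lemma binomial_power_le_exp:
  fixes b m :: real
  assumes "t \<le> N" "0 \<le> b" "0 < m"
  shows "real (N choose t) * (b ^ t * m ^ (N - t)) \<le> m ^ N * exp (exp 1 * (N * b / m) - t)"
proof -
  define y where "y = N * b / m"
  have y: "0 \<le> y"
    using assms by (simp add: y_def)
  have "real (N choose t) * fact t \<le> real N ^ t"
    using binomial_fact_pow[of N t] by (metis of_nat_fact of_nat_le_iff of_nat_mult of_nat_power)
  then have "real (N choose t) \<le> real N ^ t / fact t"
    by (simp add: field_simps)
  then have "real (N choose t) * (b / m) ^ t \<le> real N ^ t / fact t * (b / m) ^ t"
    using assms by (intro mult_right_mono) auto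
  also have "\<dots> = (exp 1 * y) ^ t / fact t / exp (real t)"
    by (simp add: y_def power_mult_distrib power_divide exp_of_nat_mult[symmetric])
  also have "\<dots> \<le> exp (exp 1 * y) / exp (real t)"
    using power_div_fact_le_exp[of "exp 1 * y" t] y by (intro divide_right_mono) auto
  also have "\<dots> = exp (exp 1 * y - t)"
    by (simp add: exp_diff)
  finally have bound: "real (N choose t) * (b / m) ^ t \<le> exp (exp 1 * y - t)" .
  have "m ^ N = m ^ t * m ^ (N - t)"
    using assms(1) by (simp add: power_add[symmetric])
  then have "real (N choose t) * (b ^ t * m ^ (N - t)) = m ^ N * (real (N choose t) * (b / m) ^ t)"
    using assms(3) by (simp add: power_divide field_simps)
  also have "\<dots> \<le> m ^ N * exp (exp 1 * y - t)"
    using bound assms(3) by (intro mult_left_mono) auto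
  finally show ?thesis
    by (simp add: y_def)
qed

lemma ln_ge_25:
  assumes "(10::real) ^ 12 \<le> n"
  shows "25 \<le> ln n"
proof -
  have "exp (25::real) = exp 1 ^ 25"
    by (simp add: exp_of_nat_mult[symmetric])
  also have "\<dots> \<le> 3 ^ 25"
    by (rule power_mono[OF exp_le]) simp
  also have "\<dots> \<le> n"
    using assms by simp
  finally have "exp 25 \<le> n" .
  moreover have "0 < n"
    by (rule less_le_trans[OF _ assms]) simp
  ultimately show ?thesis
    by (simp add: ln_ge_iff)
qed

lemma linear_le_exp:
  fixes L :: real
  assumes "25 \<le> L"
  shows "101 * L \<le> exp L"
proof -
  have "606 \<le> L * L"
    using mult_mono[of 25 L 25 L] assms by simp
  then have "101 * L \<le> L ^ 3 / fact 3"
    using mult_right_mono[of 606 "L * L" L] assms by (simp add: power3_eq_cube fact_numeral)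
  also have "\<dots> \<le> exp L"
    using power_div_fact_le_exp[of L 3] assms by simp
  finally show ?thesis .
qed

lemma large_ln_bounds:
  assumes "10 ^ 12 \<le> N"
  shows "25 \<le> ln (real N)" "101 * ln (real N) \<le> real N"
proof -
  have N: "(10::real) ^ 12 \<le> real N"
    using assms by (metis of_nat_le_iff of_nat_numeral of_nat_power)
  then show L: "25 \<le> ln (real N)"
    by (rule ln_ge_25)
  have "0 < real N"
    by (rule less_le_trans[OF _ N]) simp
  then show "101 * ln (real N) \<le> real N"
    using linear_le_exp[OF L] by simp
qed

lemma abs_sin_diff_le: "\<bar>sin (a::real) - sin b\<bar> \<le> \<bar>a - b\<bar>"
proof -
  have "\<bar>sin a - sin b\<bar> = 2 * \<bar>sin ((a - b) / 2)\<bar> * \<bar>cos ((a + b) / 2)\<bar>"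
    by (simp add: sin_diff_sin abs_mult)
  also have "\<dots> \<le> 2 * \<bar>(a - b) / 2\<bar> * 1"
    using abs_sin_x_le_abs_x[of "(a - b) / 2"] abs_cos_le_one[of "(a + b) / 2"]
    by (intro mult_mono) auto
  finally show ?thesis by simp
qed

lemma abs_cos_diff_le: "\<bar>cos (a::real) - cos b\<bar> \<le> \<bar>a - b\<bar>"
proof -
  have "\<bar>cos a - cos b\<bar> = 2 * \<bar>sin ((a + b) / 2)\<bar> * \<bar>sin ((b - a) / 2)\<bar>"
    by (simp add: cos_diff_cos abs_mult)
  also have "\<dots> \<le> 2 * 1 * \<bar>(b - a) / 2\<bar>"
    using abs_sin_x_le_abs_x[of "(b - a) / 2"] abs_sin_le_one[of "(a + b) / 2"]
    by (intro mult_mono) auto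
  finally show ?thesis by simp
qed

lemma abs_mult_diff_le:
  fixes a b a' b' :: real
  assumes "\<bar>a\<bar> \<le> 1" "\<bar>b'\<bar> \<le> 1"
  shows "\<bar>a * b - a' * b'\<bar> \<le> \<bar>b - b'\<bar> + \<bar>a - a'\<bar>"
proof -
  have "a * b - a' * b' = a * (b - b') + b' * (a - a')"
    by (simp add: algebra_simps)
  then have "\<bar>a * b - a' * b'\<bar> \<le> \<bar>a\<bar> * \<bar>b - b'\<bar> + \<bar>b'\<bar> * \<bar>a - a'\<bar>"
    by (metis abs_mult abs_triangle_ineq)
  also have "\<dots> \<le> 1 * \<bar>b - b'\<bar> + 1 * \<bar>a - a'\<bar>"
    using assms by (intro add_mono mult_right_mono) auto
  finally show ?thesis by simp
qed

lemma abs_inner_le_shift: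
  fixes x u v :: "'a::real_inner"
  assumes "norm x = 1"
  shows "\<bar>v \<bullet> x\<bar> \<le> \<bar>u \<bullet> x\<bar> + norm (v - u)"
proof -
  have "\<bar>(v - u) \<bullet> x\<bar> \<le> norm (v - u)"
    using Cauchy_Schwarz_ineq2[of "v - u" x] assms by simp
  then show ?thesis
    by (simp add: inner_diff_left)
qed

section \<open>A net on the sphere\<close>

lemma norm_vec3_power2: "(norm (y::real^3))\<^sup>2 = (y$1)\<^sup>2 + (y$2)\<^sup>2 + (y$3)\<^sup>2"
proof -
  have "(norm y)\<^sup>2 = y \<bullet> y"
    by (simp add: power2_norm_eq_inner)
  then show ?thesis
    by (simp add: inner_vec_def sum_3 power2_eq_square)
qed

definition spherical :: "real \<Rightarrow> real \<Rightarrow> real^3" where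
  "spherical t p = vector [sin t * cos p, sin t * sin p, cos t]"

lemma norm_spherical: "norm (spherical t p) = 1"
proof -
  have "(norm (spherical t p))\<^sup>2 = (sin t * cos p)\<^sup>2 + (sin t * sin p)\<^sup>2 + (cos t)\<^sup>2"
    by (simp add: norm_vec3_power2 spherical_def)
  also have "\<dots> = (sin t)\<^sup>2 * ((cos p)\<^sup>2 + (sin p)\<^sup>2) + (cos t)\<^sup>2"
    by algebra
  also have "\<dots> = 1"
    by simp
  finally show ?thesis
    using norm_ge_zero[of "spherical t p"] by (simp add: power2_eq_1_iff)
qed

lemma spherical_lipschitz:
  "norm (spherical t p - spherical t' p') \<le> 3 * (\<bar>t - t'\<bar> + \<bar>p - p'\<bar>)"
proof -
  have "\<bar>sin t * cos p - sin t' * cos p'\<bar> \<le> \<bar>t - t'\<bar> + \<bar>p - p'\<bar>"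
    using abs_mult_diff_le[of "sin t" "cos p'" "cos p" "sin t'"]
      abs_sin_diff_le[of t t'] abs_cos_diff_le[of p p'] by simp
  moreover have "\<bar>sin t * sin p - sin t' * sin p'\<bar> \<le> \<bar>t - t'\<bar> + \<bar>p - p'\<bar>"
    using abs_mult_diff_le[of "sin t" "sin p'" "sin p" "sin t'"]
      abs_sin_diff_le[of t t'] abs_sin_diff_le[of p p'] by simp
  moreover have "\<bar>cos t - cos t'\<bar> \<le> \<bar>t - t'\<bar> + \<bar>p - p'\<bar>"
    using abs_cos_diff_le[of t t'] by simp
  ultimately show ?thesis
    using norm_le_l1_cart[of "spherical t p - spherical t' p'"] by (simp add: spherical_def sum_3)
qed

lemma spherical_surj:
  assumes "norm (v::real^3) = 1"
  obtains t p where "0 \<le> t" "t \<le> pi" "0 \<le> p" "p < 2 * pi" "v = spherical t p"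
proof -
  have sq: "(v$1)\<^sup>2 + (v$2)\<^sup>2 + (v$3)\<^sup>2 = 1"
    using norm_vec3_power2[of v] assms by simp
  have v3: "\<bar>v$3\<bar> \<le> 1"
    using component_le_norm_cart[of v 3] assms by simp
  define t where "t = arccos (v$3)"
  have t: "0 \<le> t" "t \<le> pi" "cos t = v$3"
    using v3 by (auto simp: t_def arccos_lbound arccos_ubound cos_arccos_abs)
  have "sin t = sqrt (1 - (v$3)\<^sup>2)"
    using v3 by (simp add: t_def sin_arccos_abs)
  then have st: "(sin t)\<^sup>2 = (v$1)\<^sup>2 + (v$2)\<^sup>2"
    using sq v3 by (metis add_diff_cancel_right' abs_square_le_1 diff_ge_0_iff_ge real_sqrt_pow2)
  show ?thesis
  proof (cases "sin t = 0")
    case True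
    then have "v$1 = 0" "v$2 = 0"
      using st by (auto simp: sum_power2_eq_zero_iff)
    then have "v = spherical t 0"
      using t True by (auto simp: spherical_def vec_eq_iff forall_3)
    then show ?thesis
      using t pi_gt_zero that[of t 0] by simp
  next
    case False
    have "(v$1 / sin t)\<^sup>2 + (v$2 / sin t)\<^sup>2 = ((v$1)\<^sup>2 + (v$2)\<^sup>2) / (sin t)\<^sup>2"
      by (simp add: power_divide add_divide_distrib)
    also have "\<dots> = 1"
      using False by (simp add: st[symmetric])
    finally have "(v$1 / sin t)\<^sup>2 + (v$2 / sin t)\<^sup>2 = 1" .
    then obtain p where p: "0 \<le> p" "p < 2 * pi" "v$1 / sin t = cos p" "v$2 / sin t = sin p"
      using sincos_total_2pi by metis
    then have "v = spherical t p"
      using t False by (auto simp: spherical_def vec_eq_iff forall_3 field_simps)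
    then show ?thesis
      using t p that by blast
  qed
qed

definition sphere_grid :: "real \<Rightarrow> (real^3) set" where
  "sphere_grid e = (\<lambda>(a, b). spherical (real a * e) (real b * e)) `
     ({..nat \<lfloor>pi / e\<rfloor>} \<times> {..nat \<lfloor>2 * pi / e\<rfloor>})"

lemma finite_sphere_grid: "finite (sphere_grid e)"
  by (simp add: sphere_grid_def)

lemma norm_sphere_grid: "u \<in> sphere_grid e \<Longrightarrow> norm u = 1"
  by (auto simp: sphere_grid_def norm_spherical)

lemma floor_divide_approx:
  assumes "0 < e" "0 \<le> x" "x \<le> X"
  shows "nat \<lfloor>x / e\<rfloor> \<le> nat \<lfloor>X / e\<rfloor>" "\<bar>x - real (nat \<lfloor>x / e\<rfloor>) * e\<bar> \<le> e"
proof -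
  have "x / e \<le> X / e"
    using assms by (simp add: divide_right_mono)
  then show "nat \<lfloor>x / e\<rfloor> \<le> nat \<lfloor>X / e\<rfloor>"
    by (intro nat_mono floor_mono)
  have "real (nat \<lfloor>x / e\<rfloor>) = of_int \<lfloor>x / e\<rfloor>"
    using assms by simp
  moreover have "of_int \<lfloor>x / e\<rfloor> * e \<le> x" "x < (of_int \<lfloor>x / e\<rfloor> + 1) * e"
    using assms(1) by (simp_all add: floor_divide_lower floor_divide_upper)
  ultimately show "\<bar>x - real (nat \<lfloor>x / e\<rfloor>) * e\<bar> \<le> e"
    by (simp add: algebra_simps)
qed

lemma sphere_grid_net:
  assumes "0 < e" "norm (v::real^3) = 1"
  shows "\<exists>u\<in>sphere_grid e. norm (v - u) \<le> 6 * e"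
proof -
  obtain t p where tp: "0 \<le> t" "t \<le> pi" "0 \<le> p" "p < 2 * pi" "v = spherical t p"
    using spherical_surj[OF assms(2)] by blast
  define a where "a = nat \<lfloor>t / e\<rfloor>"
  define b where "b = nat \<lfloor>p / e\<rfloor>"
  have a: "a \<le> nat \<lfloor>pi / e\<rfloor>" "\<bar>t - real a * e\<bar> \<le> e"
    using floor_divide_approx[OF assms(1) tp(1,2)] by (simp_all add: a_def)
  have b: "b \<le> nat \<lfloor>2 * pi / e\<rfloor>" "\<bar>p - real b * e\<bar> \<le> e"
    using floor_divide_approx[OF assms(1) tp(3), of "2 * pi"] tp(4) by (simp_all add: b_def)
  have "spherical (real a * e) (real b * e) \<in> sphere_grid e"
    using a b by (auto simp: sphere_grid_def)
  moreover have "norm (v - spherical (real a * e) (real b * e)) \<le> 6 * e"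
    using spherical_lipschitz[of t p "real a * e" "real b * e"] tp(5) a b by simp
  ultimately show ?thesis by blast
qed

lemma card_sphere_grid_le:
  assumes "0 < e" "e \<le> 1"
  shows "real (card (sphere_grid e)) \<le> 31 / e\<^sup>2"
proof -
  have "card (sphere_grid e) \<le> (nat \<lfloor>pi / e\<rfloor> + 1) * (nat \<lfloor>2 * pi / e\<rfloor> + 1)"
    unfolding sphere_grid_def by (rule order.trans[OF card_image_le]) (auto simp: card_cartesian_product)
  then have "real (card (sphere_grid e)) \<le> real ((nat \<lfloor>pi / e\<rfloor> + 1) * (nat \<lfloor>2 * pi / e\<rfloor> + 1))"
    using of_nat_le_iff by blast
  also have "\<dots> = (real (nat \<lfloor>pi / e\<rfloor>) + 1) * (real (nat \<lfloor>2 * pi / e\<rfloor>) + 1)"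
    by (simp add: algebra_simps)
  also have "\<dots> \<le> ((pi + 1) / e) * ((2 * pi + 1) / e)"
  proof (intro mult_mono)
    have "1 \<le> 1 / e"
      using assms by simp
    moreover have "real (nat \<lfloor>pi / e\<rfloor>) \<le> pi / e" "real (nat \<lfloor>2 * pi / e\<rfloor>) \<le> 2 * pi / e"
      using assms pi_gt_zero by (simp_all add: of_nat_nat)
    ultimately show "real (nat \<lfloor>pi / e\<rfloor>) + 1 \<le> (pi + 1) / e"
      "real (nat \<lfloor>2 * pi / e\<rfloor>) + 1 \<le> (2 * pi + 1) / e"
      unfolding add_divide_distrib by linarith+
  qed (use assms pi_gt_zero in auto)
  also have "\<dots> = (pi + 1) * (2 * pi + 1) / e\<^sup>2"
    by (simp add: power2_eq_square)
  also have "\<dots> \<le> 31 / e\<^sup>2"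
  proof -
    have "(pi + 1) * (2 * pi + 1) \<le> (63/20 + 1) * (2 * (63/20) + 1)"
      using pi_approx pi_gt_zero by (intro mult_mono) auto
    then show ?thesis
      using assms by (intro divide_right_mono) auto
  qed
  finally show ?thesis .
qed

section \<open>The shell and its bands\<close>

text \<open>Sampling from the solid shell rather than from the sphere turns probabilities into Lebesgue
  volumes; the inner radius keeps the radial projection \<open>sgn\<close> away from the origin.\<close>

definition shell :: "(real^3) set" where
  "shell = cball 0 1 - ball 0 (3/5)"

definition band :: "real^3 \<Rightarrow> real \<Rightarrow> (real^3) set" where
  "band u h = {g \<in> shell. \<bar>g \<bullet> u\<bar> \<le> h * norm g}"

lemma compact_shell: "compact shell"
  unfolding shell_def by (intro compact_diff) auto

lemma shell_lmeasurable: "shell \<in> lmeasurable"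
  by (rule lmeasurable_compact[OF compact_shell])

lemma band_subset_shell: "band u h \<subseteq> shell"
  by (auto simp: band_def)

lemma band_lmeasurable: "band u h \<in> lmeasurable"
proof -
  have "band u h = shell \<inter> {g. \<bar>g \<bullet> u\<bar> - h * norm g \<le> 0}"
    by (auto simp: band_def)
  moreover have "closed {g::real^3. \<bar>g \<bullet> u\<bar> - h * norm g \<le> 0}"
    by (intro closed_Collect_le continuous_intros)
  ultimately show ?thesis
    using compact_shell by (simp add: compact_Int_closed lmeasurable_compact)
qed

lemma band_iff_sgn:
  assumes "g \<in> shell"
  shows "g \<in> band u h \<longleftrightarrow> \<bar>sgn g \<bullet> u\<bar> \<le> h"
proof -
  have "0 < norm g"
    using assms by (auto simp: shell_def)
  moreover have "sgn g \<bullet> u = (g \<bullet> u) / norm g"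
    by (simp add: sgn_div_norm field_simps)
  ultimately show ?thesis
    using assms by (simp add: band_def abs_div pos_divide_le_eq)
qed

lemma measure_shell: "measure lebesgue shell = 392/375 * pi"
proof -
  have "measure lebesgue shell = measure lebesgue (cball (0::real^3) 1) - measure lebesgue (ball (0::real^3) (3/5))"
    unfolding shell_def
    by (rule measure_Diff) (use emeasure_lborel_cball_finite[of "0::real^3" 1] in auto)
  also have "\<dots> = measure lborel (cball (0::real^3) 1) - measure lborel (ball (0::real^3) (3/5))"
    by simp
  also have "\<dots> = 392/375 * pi"
    by (simp add: content_cball unit_ball_vol_3 content_ball power_divide)
  finally show ?thesis .
qed

lemma measure_shell_bounds: "82/25 \<le> measure lebesgue shell" "measure lebesgue shell \<le> 329/100"
  using pi_approx by (simp_all add: measure_shell)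

lemma measure_band_eq_axis:
  assumes "norm u = 1"
  shows "measure lebesgue (band u h) = measure lebesgue (band (axis 3 1) h)"
proof -
  obtain f :: "real^3 \<Rightarrow> real^3" where f: "orthogonal_transformation f" "f (axis 3 1) = u"
  proof (rule orthogonal_transformation_exists[of "axis (3::3) (1::real)" u])
    show "norm (axis (3::3) (1::real)) = norm u"
      using assms by simp
  qed
  have norm_f: "norm (f y) = norm y" for y
    using f(1) by (simp add: orthogonal_transformation_norm)
  have inner_f: "f y \<bullet> u = y \<bullet> axis 3 1" for y
    using f(1) by (simp add: orthogonal_transformation_def flip: f(2))
  have "f ` band (axis 3 1) h = band u h"
  proof
    show "f ` band (axis 3 1) h \<subseteq> band u h"
      by (auto simp: band_def shell_def norm_f inner_f)
    show "band u h \<subseteq> f ` band (axis 3 1) h"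
    proof
      fix g assume g: "g \<in> band u h"
      obtain y where "g = f y"
        using orthogonal_transformation_surj[OF f(1)] by (metis surjD)
      with g show "g \<in> f ` band (axis 3 1) h"
        by (auto simp: band_def shell_def norm_f inner_f)
    qed
  qed
  then show ?thesis
    using measure_orthogonal_image[OF f(1) band_lmeasurable, of "axis 3 1" h] by simp
qed

lemma prod_UNIV_3: "prod f (UNIV::3 set) = f 1 * f 2 * f 3"
  unfolding UNIV_3 by (simp add: ac_simps)

lemma measure_cbox3:
  assumes "a1 \<le> b1" "a2 \<le> b2" "a3 \<le> b3"
  shows "measure lebesgue (cbox (vector [a1, a2, a3]) (vector [b1, b2, b3] :: real^3))
           = (b1 - a1) * (b2 - a2) * (b3 - a3)"
proof -
  have "vector [a1, a2, a3] \<in> cbox (vector [a1, a2, a3]) (vector [b1, b2, b3] :: real^3)"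
    using assms by (simp add: mem_box_cart forall_3)
  then have "cbox (vector [a1, a2, a3]) (vector [b1, b2, b3] :: real^3) \<noteq> {}"
    by auto
  then have "measure lborel (cbox (vector [a1, a2, a3]) (vector [b1, b2, b3] :: real^3))
      = (b1 - a1) * (b2 - a2) * (b3 - a3)"
    by (subst content_cbox_cart) (auto simp: prod_UNIV_3)
  then show ?thesis
    by simp
qed

lemma measure_band_le:
  assumes "norm u = 1" "0 \<le> h"
  shows "measure lebesgue (band u h) \<le> 8 * h"
proof -
  define C where "C = cbox (vector [-1, -1, -h]) (vector [1, 1, h] :: real^3)"
  have "band (axis 3 1) h \<subseteq> C"
  proof
    fix y assume y: "y \<in> band (axis 3 1) h"
    then have ny: "norm y \<le> 1"
      by (auto simp: band_def shell_def)
    have c: "\<bar>y $ i\<bar> \<le> 1" for i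
      using component_le_norm_cart[of y i] ny by simp
    have "\<bar>y $ 3\<bar> \<le> h"
      using y ny mult_left_le[of "norm y" h] assms(2) by (auto simp: band_def inner_axis)
    then show "y \<in> C"
      using c[of 1] c[of 2] by (auto simp: C_def mem_box_cart forall_3)
  qed
  then have "measure lebesgue (band (axis 3 1) h) \<le> measure lebesgue C"
    by (intro measure_mono_fmeasurable) (auto simp: band_lmeasurable C_def fmeasurableD)
  also have "\<dots> = 8 * h"
    using assms(2) unfolding C_def by (subst measure_cbox3) auto
  finally show ?thesis
    using measure_band_eq_axis[OF assms(1)] by simp
qed

lemma mem_band_axis3:
  fixes y :: "real^3"
  assumes h: "0 \<le> h" "h \<le> 1/10" and y3: "\<bar>y$3\<bar> \<le> 3/5 * h"
    and y12: "(3/5 \<le> \<bar>y$1\<bar> \<and> \<bar>y$1\<bar> \<le> 19/20 \<and> \<bar>y$2\<bar> \<le> 3/10)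
           \<or> (3/5 \<le> \<bar>y$2\<bar> \<and> \<bar>y$2\<bar> \<le> 19/20 \<and> \<bar>y$1\<bar> \<le> 3/10)"
  shows "y \<in> band (axis 3 1) h"
proof -
  obtain p q where pq: "3/5 \<le> p" "p \<le> 19/20" "0 \<le> q" "q \<le> 3/10"
    and sq12: "(y$1)\<^sup>2 + (y$2)\<^sup>2 = p\<^sup>2 + q\<^sup>2"
  proof (cases "3/5 \<le> \<bar>y$1\<bar> \<and> \<bar>y$1\<bar> \<le> 19/20 \<and> \<bar>y$2\<bar> \<le> 3/10")
    case True
    then show ?thesis
      using that[of "\<bar>y$1\<bar>" "\<bar>y$2\<bar>"] by simp
  next
    case False
    then show ?thesis
      using y12 that[of "\<bar>y$2\<bar>" "\<bar>y$1\<bar>"] by (auto simp: add.commute)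
  qed
  have "p\<^sup>2 \<le> (19/20)\<^sup>2" "q\<^sup>2 \<le> (3/10)\<^sup>2" "(3/5)\<^sup>2 \<le> p\<^sup>2"
    using pq by (auto intro!: power_mono)
  moreover have "(y$3)\<^sup>2 \<le> (3/50)\<^sup>2"
    using y3 h power_mono[of "\<bar>y$3\<bar>" "3/50" 2] by simp
  moreover have "(19/20)\<^sup>2 + (3/10)\<^sup>2 + (3/50)\<^sup>2 \<le> (1::real)\<^sup>2"
    by (simp add: power_divide)
  ultimately have "(3/5)\<^sup>2 \<le> (norm y)\<^sup>2" "(norm y)\<^sup>2 \<le> 1\<^sup>2"
    unfolding norm_vec3_power2 sq12 using zero_le_power2[of q] zero_le_power2[of "y$3"] by linarith+
  then have n: "3/5 \<le> norm y" "norm y \<le> 1"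
    using power2_le_imp_le[of "3/5" "norm y"] power2_le_imp_le[of "norm y" 1] by auto
  have "\<bar>y$3\<bar> \<le> h * norm y"
    using y3 mult_left_mono[OF n(1) h(1)] by (simp add: mult.commute)
  with n show ?thesis
    by (simp add: band_def shell_def inner_axis)
qed

lemma measure_band_ge:
  assumes u: "norm u = 1" and h: "0 \<le> h" "h \<le> 1/10"
  shows "126/125 * h \<le> measure lebesgue (band u h)"
proof -
  define B1 where "B1 = cbox (vector [3/5, -3/10, -3/5*h]) (vector [19/20, 3/10, 3/5*h] :: real^3)"
  define B2 where "B2 = cbox (vector [-19/20, -3/10, -3/5*h]) (vector [-3/5, 3/10, 3/5*h] :: real^3)"
  define B3 where "B3 = cbox (vector [-3/10, 3/5, -3/5*h]) (vector [3/10, 19/20, 3/5*h] :: real^3)"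
  define B4 where "B4 = cbox (vector [-3/10, -19/20, -3/5*h]) (vector [3/10, -3/5, 3/5*h] :: real^3)"
  have sub: "(B1 \<union> B2) \<union> (B3 \<union> B4) \<subseteq> band (axis 3 1) h"
    by (auto simp: B1_def B2_def B3_def B4_def mem_box_cart forall_3 intro!: mem_band_axis3[OF h])
  have l1: "B1 \<in> lmeasurable" and l2: "B2 \<in> lmeasurable" and l3: "B3 \<in> lmeasurable" and l4: "B4 \<in> lmeasurable"
    by (simp_all add: B1_def B2_def B3_def B4_def)
  have "B1 \<inter> B2 = {}" "B3 \<inter> B4 = {}" "(B1 \<union> B2) \<inter> (B3 \<union> B4) = {}"
    by (force simp: B1_def B2_def B3_def B4_def mem_box_cart forall_3)+
  moreover have "measure lebesgue B1 = 63/250 * h" "measure lebesgue B2 = 63/250 * h"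
    "measure lebesgue B3 = 63/250 * h" "measure lebesgue B4 = 63/250 * h"
    unfolding B1_def B2_def B3_def B4_def using h by (subst measure_cbox3; simp)+
  ultimately have "126/125 * h = measure lebesgue ((B1 \<union> B2) \<union> (B3 \<union> B4))"
    using measure_Un3[OF fmeasurable.Un[OF l1 l2] fmeasurable.Un[OF l3 l4]]
      measure_Un3[OF l1 l2] measure_Un3[OF l3 l4] by simp
  also have "\<dots> \<le> measure lebesgue (band (axis 3 1) h)"
    using sub l1 l2 l3 l4 by (intro measure_mono_fmeasurable) (auto simp: band_lmeasurable fmeasurableD)
  finally show ?thesis
    using measure_band_eq_axis[OF u] by simp
qed

section \<open>The first-moment method\<close>

lemma emeasure_PiM_PiE_finite_measure:
  assumes "finite_measure M" "finite I" "\<And>i. i \<in> I \<Longrightarrow> X i \<in> sets M"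
  shows "emeasure (PiM I (\<lambda>_. M)) (PiE I X) = ennreal (\<Prod>i\<in>I. measure M (X i))"
proof -
  interpret M: finite_measure M by fact
  interpret product_sigma_finite "\<lambda>_. M"
    unfolding product_sigma_finite_def using M.sigma_finite_measure_axioms by simp
  have "emeasure (PiM I (\<lambda>_. M)) (PiE I X) = (\<Prod>i\<in>I. emeasure M (X i))"
    using assms(2,3) by (rule emeasure_PiM)
  also have "\<dots> = (\<Prod>i\<in>I. ennreal (measure M (X i)))"
    by (simp add: M.emeasure_eq_measure)
  finally show ?thesis
    by (simp add: prod_ennreal)
qed

lemma PiM_many_hits_event:
  assumes M: "finite_measure M" and B: "B \<in> sets M"
  obtains E where "E \<in> sets (PiM {..<N} (\<lambda>_. M))"
    "{\<omega> \<in> space (PiM {..<N} (\<lambda>_. M)). t \<le> card {i. i < N \<and> \<omega> i \<in> B}} \<subseteq> E"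
    "emeasure (PiM {..<N} (\<lambda>_. M)) E
       \<le> ennreal (real (N choose t) * (measure M B ^ t * measure M (space M) ^ (N - t)))"
proof -
  define P where "P = PiM {..<N} (\<lambda>_. M)"
  define Ts where "Ts = {T. T \<subseteq> {..<N} \<and> card T = t}"
  define E where "E T = PiE {..<N} (\<lambda>i. if i \<in> T then B else space M)" for T
  have fTs: "finite Ts"
    by (simp add: Ts_def finite_Pow_iff)
  have E: "E T \<in> sets P" for T
    unfolding E_def P_def using B by (intro sets_PiM_I_finite) auto
  have mE: "emeasure P (E T) = ennreal (measure M B ^ t * measure M (space M) ^ (N - t))" if "T \<in> Ts" for T
  proof -
    have T: "T \<subseteq> {..<N}" "card T = t"
      using that by (auto simp: Ts_def)
    have "emeasure P (E T) = ennreal (\<Prod>i<N. measure M (if i \<in> T then B else space M))"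
      unfolding E_def P_def using B
      by (intro emeasure_PiM_PiE_finite_measure[OF M, of _ "\<lambda>i. if i \<in> T then B else space M"]) auto
    also have "(\<Prod>i<N. measure M (if i \<in> T then B else space M))
        = (\<Prod>i<N. if i \<in> T then measure M B else measure M (space M))"
      by (rule prod.cong) auto
    also have "\<dots> = measure M B ^ card ({..<N} \<inter> T) * measure M (space M) ^ card ({..<N} - T)"
      by (simp add: prod.If_cases Diff_eq)
    also have "{..<N} \<inter> T = T"
      using T by auto
    also have "card ({..<N} - T) = N - t"
      using T by (simp add: card_Diff_subset[OF finite_subset[OF T(1)]])
    finally show ?thesis
      using T by simp
  qed
  have cover: "{\<omega> \<in> space P. t \<le> card {i. i < N \<and> \<omega> i \<in> B}} \<subseteq> (\<Union>T\<in>Ts. E T)"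
  proof
    fix \<omega> assume "\<omega> \<in> {\<omega> \<in> space P. t \<le> card {i. i < N \<and> \<omega> i \<in> B}}"
    then have \<omega>: "\<omega> \<in> PiE {..<N} (\<lambda>_. space M)" "t \<le> card {i. i < N \<and> \<omega> i \<in> B}"
      by (auto simp: P_def space_PiM)
    then obtain T where T: "T \<subseteq> {i. i < N \<and> \<omega> i \<in> B}" "card T = t"
      using obtain_subset_with_card_n[OF \<omega>(2)] by blast
    then have "T \<in> Ts" "\<omega> \<in> E T"
      using \<omega>(1) by (auto simp: Ts_def E_def PiE_def Pi_def)
    then show "\<omega> \<in> (\<Union>T\<in>Ts. E T)"
      by blast
  qed
  have "emeasure P (\<Union>T\<in>Ts. E T) \<le> (\<Sum>T\<in>Ts. emeasure P (E T))"
    using E by (intro emeasure_subadditive_finite[OF fTs]) auto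
  also have "\<dots> = ennreal (real (N choose t) * (measure M B ^ t * measure M (space M) ^ (N - t)))"
    using mE n_subsets[of "{..<N}" t]
    by (simp add: Ts_def ennreal_mult' ennreal_of_nat_eq_real_of_nat)
  finally show ?thesis
    using E fTs by (intro that[folded P_def, OF _ cover]) auto
qed

text \<open>The two summands bound the (unnormalised) measure of the events that no sample point lies
  in \<open>A u\<close>, resp. that at least \<open>t\<close> of them lie in \<open>B u\<close>.\<close>

lemma exists_hitting_sparse_sample:
  fixes M :: "'a measure" and A B :: "'v \<Rightarrow> 'a set"
  assumes M: "finite_measure M" and V: "finite V"
    and AB: "\<And>u. u \<in> V \<Longrightarrow> A u \<in> sets M \<and> B u \<in> sets M"
    and small: "(\<Sum>u\<in>V. measure M (space M - A u) ^ N
               + real (N choose t) * (measure M (B u) ^ t * measure M (space M) ^ (N - t)))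
               < measure M (space M) ^ N"
  shows "\<exists>\<omega>. (\<forall>i<N. \<omega> i \<in> space M) \<and>
           (\<forall>u\<in>V. (\<exists>i<N. \<omega> i \<in> A u) \<and> card {i. i < N \<and> \<omega> i \<in> B u} < t)"
proof (rule ccontr)
  assume none: "\<not> ?thesis"
  define P where "P = PiM {..<N} (\<lambda>_. M)"
  define Miss where "Miss u = PiE {..<N} (\<lambda>_. space M - A u)" for u
  define Many where "Many u = {\<omega> \<in> space P. t \<le> card {i. i < N \<and> \<omega> i \<in> B u}}" for u
  have spP: "space P = PiE {..<N} (\<lambda>_. space M)"
    by (simp add: P_def space_PiM)
  have Miss: "Miss u \<in> sets P" "emeasure P (Miss u) = ennreal (measure M (space M - A u) ^ N)"
    if "u \<in> V" for u
    using AB[OF that] unfolding Miss_def P_def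
    by (auto intro!: sets_PiM_I_finite simp: emeasure_PiM_PiE_finite_measure[OF M])
  have "\<forall>u\<in>V. \<exists>E. E \<in> sets P \<and> {\<omega> \<in> space P. t \<le> card {i. i < N \<and> \<omega> i \<in> B u}} \<subseteq> E \<and>
      emeasure P E \<le> ennreal (real (N choose t) * (measure M (B u) ^ t * measure M (space M) ^ (N - t)))"
  proof
    fix u assume "u \<in> V"
    then obtain E where "E \<in> sets P" "{\<omega> \<in> space P. t \<le> card {i. i < N \<and> \<omega> i \<in> B u}} \<subseteq> E"
      "emeasure P E \<le> ennreal (real (N choose t) * (measure M (B u) ^ t * measure M (space M) ^ (N - t)))"
      unfolding P_def using AB by (blast intro: PiM_many_hits_event[OF M])
    then show "\<exists>E. E \<in> sets P \<and> {\<omega> \<in> space P. t \<le> card {i. i < N \<and> \<omega> i \<in> B u}} \<subseteq> E \<and>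
      emeasure P E \<le> ennreal (real (N choose t) * (measure M (B u) ^ t * measure M (space M) ^ (N - t)))"
      by blast
  qed
  from bchoice[OF this] obtain Many where Many: "\<forall>u\<in>V. Many u \<in> sets P \<and>
      {\<omega> \<in> space P. t \<le> card {i. i < N \<and> \<omega> i \<in> B u}} \<subseteq> Many u \<and>
      emeasure P (Many u) \<le> ennreal (real (N choose t) * (measure M (B u) ^ t * measure M (space M) ^ (N - t)))" ..
  have MM: "Miss u \<union> Many u \<in> sets P" if "u \<in> V" for u
    using Miss(1) Many that by blast
  have "space P \<subseteq> (\<Union>u\<in>V. Miss u \<union> Many u)"
  proof
    fix \<omega> assume \<omega>: "\<omega> \<in> space P"
    then obtain u where u: "u \<in> V" "\<not> ((\<exists>i<N. \<omega> i \<in> A u) \<and> card {i. i < N \<and> \<omega> i \<in> B u} < t)"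
      using none spP by auto
    show "\<omega> \<in> (\<Union>u\<in>V. Miss u \<union> Many u)"
    proof (cases "\<exists>i<N. \<omega> i \<in> A u")
      case True
      then have "t \<le> card {i. i < N \<and> \<omega> i \<in> B u}"
        using u(2) by simp
      then have "\<omega> \<in> Many u"
        using Many u(1) \<omega> by blast
      with u(1) show ?thesis
        by blast
    next
      case False
      then have "\<omega> \<in> Miss u"
        using \<omega> spP by (auto simp: Miss_def PiE_def Pi_def)
      with u(1) show ?thesis
        by blast
    qed
  qed
  then have "emeasure P (space P) \<le> emeasure P (\<Union>u\<in>V. Miss u \<union> Many u)"
    using MM V by (intro emeasure_mono sets.finite_UN) auto
  also have "\<dots> \<le> (\<Sum>u\<in>V. emeasure P (Miss u \<union> Many u))"
    using MM by (intro emeasure_subadditive_finite[OF V]) auto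
  also have "\<dots> \<le> (\<Sum>u\<in>V. emeasure P (Miss u) + emeasure P (Many u))"
    using Miss Many by (intro sum_mono emeasure_subadditive) auto
  also have "\<dots> \<le> (\<Sum>u\<in>V. ennreal (measure M (space M - A u) ^ N
               + real (N choose t) * (measure M (B u) ^ t * measure M (space M) ^ (N - t))))"
    using Miss Many by (intro sum_mono) (auto simp: ennreal_plus intro: add_left_mono)
  also have "\<dots> = ennreal (\<Sum>u\<in>V. measure M (space M - A u) ^ N
               + real (N choose t) * (measure M (B u) ^ t * measure M (space M) ^ (N - t)))"
    by (rule sum_ennreal) simp
  finally have "emeasure P (space P) \<le> ennreal (\<Sum>u\<in>V. measure M (space M - A u) ^ N
               + real (N choose t) * (measure M (B u) ^ t * measure M (space M) ^ (N - t)))" .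
  moreover have "emeasure P (space P) = ennreal (measure M (space M) ^ N)"
    unfolding spP unfolding P_def by (subst emeasure_PiM_PiE_finite_measure[OF M]) auto
  ultimately show False
    using small by (simp add: ennreal_le_iff sum_nonneg)
qed

lemma exists_hitting_sparse_sample_lebesgue:
  assumes S: "S \<in> lmeasurable" and V: "finite V"
    and AB: "\<And>u. u \<in> V \<Longrightarrow> A u \<in> lmeasurable \<and> A u \<subseteq> S \<and> B u \<in> lmeasurable \<and> B u \<subseteq> S"
    and small: "(\<Sum>u\<in>V. (measure lebesgue S - measure lebesgue (A u)) ^ N
               + real (N choose t) * (measure lebesgue (B u) ^ t * measure lebesgue S ^ (N - t)))
               < measure lebesgue S ^ N"
  shows "\<exists>\<omega>. (\<forall>i<N. \<omega> i \<in> S) \<and>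
           (\<forall>u\<in>V. (\<exists>i<N. \<omega> i \<in> A u) \<and> card {i. i < N \<and> \<omega> i \<in> B u} < t)"
proof -
  define M where "M = restrict_space lebesgue S"
  have S_sets: "S \<in> sets lebesgue"
    using S by (rule fmeasurableD)
  have space_M: "space M = S"
    by (simp add: M_def space_restrict_space)
  have measure_M: "measure M X = measure lebesgue X" if "X \<subseteq> S" "X \<in> sets lebesgue" for X
    using that S_sets by (simp add: M_def measure_restrict_space)
  have sets_M: "X \<in> sets M" if "X \<subseteq> S" "X \<in> sets lebesgue" for X
    using that S_sets by (simp add: M_def sets_restrict_space_iff)
  have M: "finite_measure M"
  proof (rule finite_measureI)
    have "emeasure M (space M) = emeasure lebesgue S"
      unfolding space_M unfolding M_def by (rule emeasure_restrict_space) (use S_sets in auto)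
    then show "emeasure M (space M) \<noteq> \<infinity>"
      using fmeasurableD2[OF S] by simp
  qed
  have "measure M (space M - A u) = measure lebesgue S - measure lebesgue (A u)" if "u \<in> V" for u
    using AB[OF that] S_sets measure_M[of "S - A u"] measure_Diff[of lebesgue S "A u"] fmeasurableD2[OF S]
    by (auto simp: space_M fmeasurableD)
  moreover have "measure M (B u) = measure lebesgue (B u)" if "u \<in> V" for u
    using AB[OF that] by (auto intro: measure_M fmeasurableD)
  moreover have "measure M (space M) = measure lebesgue S"
    using S_sets by (simp add: space_M measure_M)
  ultimately have "(\<Sum>u\<in>V. measure M (space M - A u) ^ N
      + real (N choose t) * (measure M (B u) ^ t * measure M (space M) ^ (N - t))) < measure M (space M) ^ N"
    using small by (simp cong: sum.cong)
  moreover have "A u \<in> sets M \<and> B u \<in> sets M" if "u \<in> V" for u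
    using AB[OF that] by (auto intro: sets_M fmeasurableD)
  ultimately show ?thesis
    using exists_hitting_sparse_sample[OF M V] by (simp add: space_M)
qed

section \<open>A good sample\<close>

lemma shell_band_miss_le:
  fixes N :: nat and u :: "real^3"
  assumes N: "10 ^ 12 \<le> N" and u: "norm u = 1"
  defines "L \<equiv> ln (real N)" and "m \<equiv> measure lebesgue shell"
  shows "(m - measure lebesgue (band u (8 * L / N))) ^ N \<le> m ^ N * exp (- (12/5 * L))"
proof -
  define a where "a = measure lebesgue (band u (8 * L / N))"
  have L: "25 \<le> L" "101 * L \<le> real N"
    using large_ln_bounds[OF N] by (simp_all add: L_def)
  then have N_pos: "0 < real N"
    by linarith
  have m: "82/25 \<le> m" "m \<le> 329/100"
    using measure_shell_bounds by (simp_all add: m_def)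
  have "126/125 * (8 * L / N) \<le> a"
    unfolding a_def using L N_pos by (intro measure_band_ge[OF u]) (auto simp: field_simps)
  then have "1008/125 * L \<le> a * N"
    using N_pos by (simp add: field_simps)
  moreover have "12/5 * L * m \<le> 12/5 * L * (329/100)"
    using L m by (intro mult_left_mono) auto
  ultimately have "12/5 * L * m \<le> a * N"
    using L by linarith
  then have "12/5 * L \<le> a * N / m"
    using m by (simp add: pos_le_divide_eq)
  moreover have "0 \<le> a" "a \<le> m"
    unfolding a_def m_def using band_subset_shell
    by (auto intro!: measure_mono_fmeasurable simp: band_lmeasurable shell_lmeasurable fmeasurableD)
  ultimately show ?thesis
    using power_diff_le_exp[of a m N] m by (auto simp: a_def intro: order.trans mult_left_mono)
qed

lemma shell_band_crowd_le:
  fixes N :: nat and u :: "real^3"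
  assumes N: "10 ^ 12 \<le> N" and u: "norm u = 1"
  defines "L \<equiv> ln (real N)" and "t \<equiv> nat \<lceil>100 * ln (real N)\<rceil>" and "m \<equiv> measure lebesgue shell"
  shows "real (N choose t) * (measure lebesgue (band u (12 * L / N)) ^ t * m ^ (N - t))
           \<le> m ^ N * exp (- (12/5 * L))"
proof -
  define b where "b = measure lebesgue (band u (12 * L / N))"
  have L: "25 \<le> L" "101 * L \<le> real N"
    using large_ln_bounds[OF N] by (simp_all add: L_def)
  then have N_pos: "0 < real N"
    by linarith
  have m: "82/25 \<le> m" "m \<le> 329/100"
    using measure_shell_bounds by (simp_all add: m_def)
  have t: "100 * L \<le> real t" "real t \<le> 100 * L + 1"
    using L by (simp_all add: t_def L_def)
  then have "t \<le> N"
    using L by linarith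
  have "b \<le> 8 * (12 * L / N)"
    unfolding b_def using L N_pos by (intro measure_band_le[OF u]) auto
  then have "N * b \<le> 96 * L"
    using N_pos by (simp add: field_simps)
  moreover have "30 * L * (82/25) \<le> 30 * L * m"
    using L m by (intro mult_left_mono) auto
  ultimately have "N * b \<le> 30 * L * m"
    using L by linarith
  then have "N * b / m \<le> 30 * L"
    using m by (simp add: pos_divide_le_eq)
  moreover have "0 \<le> N * b / m"
    using m by (simp add: b_def)
  ultimately have "exp 1 * (N * b / m) \<le> 3 * (30 * L)"
    using exp_le by (intro mult_mono) auto
  moreover have "exp (- (10 * L)) \<le> exp (- (12/5 * L))"
    using L by simp
  ultimately have "exp (exp 1 * (N * b / m) - t) \<le> exp (- (12/5 * L))"
    using t(1) by (auto intro: order.trans)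
  then show ?thesis
    using binomial_power_le_exp[OF \<open>t \<le> N\<close>, of b m] m
    by (auto simp: b_def intro: order.trans mult_left_mono)
qed

lemma card_sphere_grid_le_square:
  assumes "10 ^ 12 \<le> N"
  shows "real (card (sphere_grid (ln (real N) / (3 * real N)))) \<le> (real N)\<^sup>2"
proof -
  define L where "L = ln (real N)"
  have L: "25 \<le> L" "101 * L \<le> real N"
    using large_ln_bounds[OF assms] by (simp_all add: L_def)
  have "real (card (sphere_grid (L / (3 * real N)))) \<le> 31 / (L / (3 * real N))\<^sup>2"
    using L by (intro card_sphere_grid_le) auto
  also have "\<dots> = 279 / L\<^sup>2 * (real N)\<^sup>2"
    using L by (simp add: field_simps power2_eq_square)
  also have "\<dots> \<le> (real N)\<^sup>2"
    using L power_mono[of 25 L 2] by (intro mult_left_le_one_le) (auto simp: field_simps)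
  finally show ?thesis
    by (simp add: L_def)
qed

lemma square_mult_exp_ln_lt:
  assumes "10 ^ 12 \<le> N"
  shows "2 * (real N)\<^sup>2 * exp (- (12/5 * ln (real N))) < 1"
proof -
  define L where "L = ln (real N)"
  have L: "25 \<le> L" "101 * L \<le> real N"
    using large_ln_bounds[OF assms] by (simp_all add: L_def)
  then have "exp L = real N"
    by (simp add: L_def)
  then have "(real N)\<^sup>2 * exp (- (12/5 * L)) = exp L * exp L * exp (- (12/5 * L))"
    by (simp add: power2_eq_square)
  also have "\<dots> = exp (L + L + - (12/5 * L))"
    by (simp only: exp_add)
  also have "\<dots> \<le> exp (-10)"
    using L by simp
  also have "exp (-10) < (1 / 2 :: real)"
    using exp_ge_add_one_self[of 10] by (simp add: exp_minus field_simps)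
  finally show ?thesis
    by (simp add: L_def)
qed

lemma exists_shell_sample:
  fixes N :: nat
  assumes N: "10 ^ 12 \<le> N"
  defines "L \<equiv> ln (real N)"
  shows "\<exists>\<omega>. (\<forall>i<N. \<omega> i \<in> shell) \<and>
           (\<forall>u\<in>sphere_grid (L / (3 * real N)). (\<exists>i<N. \<omega> i \<in> band u (8 * L / N)) \<and>
              card {i. i < N \<and> \<omega> i \<in> band u (12 * L / N)} < nat \<lceil>100 * L\<rceil>)"
proof (rule exists_hitting_sparse_sample_lebesgue[OF shell_lmeasurable finite_sphere_grid])
  show "band u h \<in> lmeasurable \<and> band u h \<subseteq> shell \<and> band u h' \<in> lmeasurable \<and> band u h' \<subseteq> shell"
    for u h h'
    by (simp add: band_lmeasurable band_subset_shell)
  define m where "m = measure lebesgue shell"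
  define V where "V = sphere_grid (L / (3 * real N))"
  have "(\<Sum>u\<in>V. (m - measure lebesgue (band u (8 * L / N))) ^ N
          + real (N choose nat \<lceil>100 * L\<rceil>) * (measure lebesgue (band u (12 * L / N)) ^ nat \<lceil>100 * L\<rceil>
            * m ^ (N - nat \<lceil>100 * L\<rceil>)))
        \<le> (\<Sum>u\<in>V. m ^ N * exp (- (12/5 * L)) + m ^ N * exp (- (12/5 * L)))"
    unfolding V_def m_def L_def
    by (intro sum_mono add_mono shell_band_miss_le[OF N] shell_band_crowd_le[OF N])
      (auto dest: norm_sphere_grid)
  also have "\<dots> = real (card V) * (2 * m ^ N * exp (- (12/5 * L)))"
    by simp
  also have "\<dots> \<le> (real N)\<^sup>2 * (2 * m ^ N * exp (- (12/5 * L)))"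
    using card_sphere_grid_le_square[OF N] by (intro mult_right_mono) (auto simp: V_def L_def m_def)
  also have "\<dots> = m ^ N * (2 * (real N)\<^sup>2 * exp (- (12/5 * L)))"
    by simp
  also have "\<dots> < m ^ N"
    using square_mult_exp_ln_lt[OF N] measure_shell_bounds by (simp add: m_def L_def)
  finally show "(\<Sum>u\<in>sphere_grid (L / (3 * real N)). (measure lebesgue shell - measure lebesgue (band u (8 * L / N))) ^ N
          + real (N choose nat \<lceil>100 * L\<rceil>) * (measure lebesgue (band u (12 * L / N)) ^ nat \<lceil>100 * L\<rceil>
            * measure lebesgue shell ^ (N - nat \<lceil>100 * L\<rceil>)))
        < measure lebesgue shell ^ N"
    by (simp add: V_def m_def)
qed

lemma strips_from_band_sample:
  fixes \<omega> :: "nat \<Rightarrow> real^3"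
  assumes shell: "\<forall>i<N. \<omega> i \<in> shell"
    and net: "\<forall>v\<in>sphere2. \<exists>u\<in>V. norm (v - u) \<le> d"
    and sample: "\<forall>u\<in>V. (\<exists>i<N. \<omega> i \<in> band u h) \<and> card {i. i < N \<and> \<omega> i \<in> band u h'} < t"
    and widths: "h + d \<le> w" "w + d \<le> h'"
  shows "(\<forall>i<N. sgn (\<omega> i) \<in> sphere2) \<and> sphere2 \<subseteq> (\<Union>i<N. strip (sgn (\<omega> i)) w) \<and>
         (\<forall>v\<in>sphere2. card {i. i < N \<and> v \<in> strip (sgn (\<omega> i)) w} < t)"
proof (intro conjI allI impI ballI subsetI)
  have norm_sgn: "norm (sgn (\<omega> i)) = 1" if "i < N" for i
    using shell that by (auto simp: shell_def norm_sgn)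
  then show "sgn (\<omega> i) \<in> sphere2" if "i < N" for i
    using that by (simp add: sphere2_def)
  fix v assume v: "v \<in> sphere2"
  then obtain u where u: "u \<in> V" "norm (v - u) \<le> d"
    using net by blast
  {
    obtain i where i: "i < N" "\<omega> i \<in> band u h"
      using sample u(1) by blast
    then have "\<bar>u \<bullet> sgn (\<omega> i)\<bar> \<le> h"
      using band_iff_sgn[of "\<omega> i" u h] shell by (simp add: inner_commute)
    then have "\<bar>v \<bullet> sgn (\<omega> i)\<bar> \<le> w"
      using abs_inner_le_shift[OF norm_sgn[OF i(1)], of v u] u(2) widths(1) by linarith
    with i(1) v show "v \<in> (\<Union>i<N. strip (sgn (\<omega> i)) w)"
      by (auto simp: strip_def)
  }
  have "{i. i < N \<and> v \<in> strip (sgn (\<omega> i)) w} \<subseteq> {i. i < N \<and> \<omega> i \<in> band u h'}"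
  proof safe
    fix i assume i: "i < N" "v \<in> strip (sgn (\<omega> i)) w"
    have "\<bar>v \<bullet> sgn (\<omega> i)\<bar> \<le> w"
      using i(2) by (simp add: strip_def)
    then have "\<bar>u \<bullet> sgn (\<omega> i)\<bar> \<le> h'"
      using abs_inner_le_shift[OF norm_sgn[OF i(1)], of u v] u(2) widths(2)
      by (simp add: norm_minus_commute)
    then show "\<omega> i \<in> band u h'"
      using band_iff_sgn[of "\<omega> i" u h'] shell i(1) by (simp add: inner_commute)
  qed
  then have "card {i. i < N \<and> v \<in> strip (sgn (\<omega> i)) w} \<le> card {i. i < N \<and> \<omega> i \<in> band u h'}"
    by (intro card_mono) auto
  also have "\<dots> < t"
    using sample u(1) by blast
  finally show "card {i. i < N \<and> v \<in> strip (sgn (\<omega> i)) w} < t" .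
qed

theorem theorem1p4:
  "\<exists>c::real. \<exists>N0::nat. \<forall>N::nat. N \<ge> N0 \<longrightarrow>
     (\<exists>x :: nat \<Rightarrow> real^3.
        (\<forall>i<N. x i \<in> sphere2) \<and>
        sphere2 \<subseteq> (\<Union>i<N. strip (x i) (10 * ln (real N) / real N)) \<and>
        (\<forall>v\<in>sphere2. real (card {i. i < N \<and> v \<in> strip (x i) (10 * ln (real N) / real N)})
                         \<le> c * ln (real N)))"
proof (intro exI[of _ "100::real"] exI[of _ "10 ^ 12::nat"] allI impI)
  fix N :: nat
  assume N: "10 ^ 12 \<le> N"
  define L where "L = ln (real N)"
  have L: "25 \<le> L" "101 * L \<le> real N"
    using large_ln_bounds[OF N] by (simp_all add: L_def)
  obtain \<omega> where \<omega>: "\<forall>i<N. \<omega> i \<in> shell"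
    "\<forall>u\<in>sphere_grid (L / (3 * real N)). (\<exists>i<N. \<omega> i \<in> band u (8 * L / N)) \<and>
       card {i. i < N \<and> \<omega> i \<in> band u (12 * L / N)} < nat \<lceil>100 * L\<rceil>"
    using exists_shell_sample[OF N] unfolding L_def by blast
  have "\<forall>v\<in>sphere2. \<exists>u\<in>sphere_grid (L / (3 * real N)). norm (v - u) \<le> 2 * L / N"
    using sphere_grid_net[of "L / (3 * real N)"] L by (auto simp: sphere2_def)
  from strips_from_band_sample[OF \<omega>(1) this \<omega>(2), of "10 * L / N"]
  have strips: "(\<forall>i<N. sgn (\<omega> i) \<in> sphere2) \<and> sphere2 \<subseteq> (\<Union>i<N. strip (sgn (\<omega> i)) (10 * L / N)) \<and>
      (\<forall>v\<in>sphere2. card {i. i < N \<and> v \<in> strip (sgn (\<omega> i)) (10 * L / N)} < nat \<lceil>100 * L\<rceil>)"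
    by (simp add: field_simps)
  have "real k \<le> 100 * L" if "k < nat \<lceil>100 * L\<rceil>" for k
    using that L by linarith
  then show "\<exists>x :: nat \<Rightarrow> real^3. (\<forall>i<N. x i \<in> sphere2) \<and>
      sphere2 \<subseteq> (\<Union>i<N. strip (x i) (10 * ln (real N) / real N)) \<and>
      (\<forall>v\<in>sphere2. real (card {i. i < N \<and> v \<in> strip (x i) (10 * ln (real N) / real N)})
                       \<le> 100 * ln (real N))"
    using strips unfolding L_def by (intro exI[of _ "\<lambda>i. sgn (\<omega> i)"]) auto
qed

end
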